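(* Let $\lambda\in\mathbb C\setminus(\mathbb Z\setminus\{0\})$, with notation as in the context. (i) For integers $k,k'\ge0$, $|l|\le k$, $|l'|\le k'$, $\langle e_{kl},e_{k'l'}\rangle=0$ unless $k=k'$ and $l+l'=0$. (ii) For each fixed integer $l\ge0$, the polynomials $f_{kl}$, $k\ge l$, form an orthogonal basis of $\mathbb C[H]$ with respect to the bilinear form $\langle f,g\rangle_l=\mathrm{tr}\big(f(H)g(H)T_1(H)\cdots T_l(H)\big)$. (iii) For $0\le l\le k$, up to a constant factor $f_{kl}(H)$ coincides with $${}_3F_2\left(\begin{matrix}l-k,\ l+k+1,\ \tfrac12(1-\lambda-H)\\ l+1,\ l+1-\lambda\end{matrix}\ \Big|\ 1\right).$$
   Context: $\mathfrak{sl}(2)$ has basis $X,H,Y$ with $[X,Y]=H$, $[H,X]=2X$, $[H,Y]=-2Y$. $\mathfrak A_\lambda=U(\mathfrak{sl}(2))/I_\lambda$, where $I_\lambda$ is the two-sided ideal generated by $2YX+\frac12H^2+H-\frac12(\lambda^2-1)$; in $\mathfrak A_\lambda$, $XY=\frac14(\lambda^2-(H-1)^2)$. $\mathfrak{gl}(\lambda)$ is $\mathfrak A_\lambda$ with bracket $[a,b]=ab-ba$. The subalgebra generated by $H$ is identified with $\mathbb C[H]$; for $l>0$ every element of $H$-weight $2l$ (resp. $-2l$) is uniquely $X^lf(H)$ (resp. $f(H)Y^l$) with $f\in\mathbb C[H]$. The trace $\mathrm{tr}:\mathfrak{gl}(\lambda)\to\mathbb C$ is the linear functional with $\mathrm{tr}(ab)=\mathrm{tr}(ba)$,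 vanishing on elements of nonzero $H$-weight, whose restriction to $\mathbb C[H]$ is given by $\sum_{m\ge0}\mathrm{tr}(H^m)\frac{t^m}{m!}=\frac{e^{\lambda t}-e^{-\lambda t}}{e^t-e^{-t}}$ if $\lambda\neq0$ and $=\frac{2t}{e^t-e^{-t}}$ if $\lambda=0$. $\langle u,v\rangle=\mathrm{tr}(uv)$. For integers $k\ge0$, $|l|\le k$: $e_{kl}=(\mathrm{ad}\,Y)^{k-l}(X^k)$; for $0\le l\le k$, $f_{kl},f_{k,-l}\in\mathbb C[H]$ are defined by $(\mathrm{ad}\,Y)^{k-l}(X^k)=X^lf_{kl}(H)$, $(\mathrm{ad}\,Y)^{k+l}(X^k)=f_{k,-l}(H)Y^l$. $T_i(H)=\frac14(\lambda^2-(H+2i-1)^2)$, empty products equal $1$. ${}_3F_2\left(\begin{matrix}a_1,a_2,a_3\\ b_1,b_2\end{matrix}\,\big|\,z\right)=\sum_{i\ge0}\frac{(a_1)_i(a_2)_i(a_3)_i}{(b_1)_i(b_2)_i}\frac{z^i}{i!}$, $(a)_0=1$, $(a)_i=a(a+1)\cdots(a+i-1)$. *)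

theory Defs
  imports "HOL-Computational_Algebra.Computational_Algebra"
begin

text \<open>
  Concrete model of the algebra A_lam = U(sl2)/I_lam via its weight normal form.
  An element is a finitely supported function  u :: int => complex poly;
  the component u m (for m >= 0) stands for X^m (u m)(H), and for m < 0 it
  stands for (u m)(H) Y^(-m).  So u m is the component of H-weight 2m.
  The polynomial variable is H.  Relations used (all consequences of the defining
  relations):  f(H) X = X f(H+2),  Y f(H) = f(H+2) Y,
  X^n Y^n = T_0(H) T_(-1)(H) ... T_(1-n)(H),  Y^n X^n = T_1(H) ... T_n(H).
\<close>

definition shiftp :: "complex \<Rightarrow> complex poly \<Rightarrow> complex poly" where
  "shiftp c p = pcompose p [:c, 1:]"

definition Tp :: "complex \<Rightarrow> int \<Rightarrow> complex poly" where
  "Tp lam i = smult (1/4) ([:lam^2:] - [:2 * of_int i - 1, 1:]^2)"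

definition XYp :: "complex \<Rightarrow> nat \<Rightarrow> complex poly" where
  "XYp lam n = (\<Prod>i<n. Tp lam (- int i))"       \<comment> \<open>X^n Y^n\<close>

definition YXp :: "complex \<Rightarrow> nat \<Rightarrow> complex poly" where
  "YXp lam n = (\<Prod>i\<in>{1..n}. Tp lam (int i))"  \<comment> \<open>Y^n X^n\<close>

text \<open>Product of a homogeneous element of weight index a with one of weight index b
  (result has weight index a + b).\<close>
definition hprod :: "complex \<Rightarrow> int \<Rightarrow> complex poly \<Rightarrow> int \<Rightarrow> complex poly \<Rightarrow> complex poly" where
  "hprod lam a f b g =
    (if 0 \<le> a \<and> 0 \<le> b then shiftp (of_int (2*b)) f * g
     else if a < 0 \<and> b < 0 then f * shiftp (of_int (-2*a)) g
     else if 0 \<le> a then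
       (if -b \<le> a then shiftp (of_int (2*b)) (f * g) * XYp lam (nat (-b))
        else XYp lam (nat a) * shiftp (of_int (-2*a)) (f * g))
     else
       (if -a \<le> b then shiftp (of_int (2*(b+a))) (f * YXp lam (nat (-a))) * g
        else f * shiftp (of_int (2*(-a-b))) (YXp lam (nat b) * g)))"

type_synonym alg = "int \<Rightarrow> complex poly"

definition supp :: "alg \<Rightarrow> int set" where
  "supp u = {m. u m \<noteq> 0}"

definition amult :: "complex \<Rightarrow> alg \<Rightarrow> alg \<Rightarrow> alg" where
  "amult lam u v = (\<lambda>n. \<Sum>a\<in>supp u. \<Sum>b\<in>supp v.
       if a + b = n then hprod lam a (u a) b (v b) else 0)"

definition bracket :: "complex \<Rightarrow> alg \<Rightarrow> alg \<Rightarrow> alg" where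
  "bracket lam u v = (\<lambda>n. amult lam u v n - amult lam v u n)"

definition hom :: "int \<Rightarrow> complex poly \<Rightarrow> alg" where
  "hom m p = (\<lambda>n. if n = m then p else 0)"

definition Xel :: alg where "Xel = hom 1 1"
definition Yel :: alg where "Yel = hom (-1) 1"
definition Hel :: alg where "Hel = hom 0 [:0, 1:]"

definition Xpow :: "complex \<Rightarrow> nat \<Rightarrow> alg" where
  "Xpow lam k = ((amult lam Xel) ^^ k) (hom 0 1)"

definition ekl :: "complex \<Rightarrow> nat \<Rightarrow> int \<Rightarrow> alg" where
  "ekl lam k l = ((bracket lam Yel) ^^ nat (int k - l)) (Xpow lam k)"

text \<open>f_{kl}: the polynomial with e_{kl} = X^l f_{kl}(H) (l >= 0), resp.
  e_{k,-l} = f_{k,-l}(H) Y^l; i.e. the weight-2l component of e_{kl}.\<close>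
definition fkl :: "complex \<Rightarrow> nat \<Rightarrow> int \<Rightarrow> complex poly" where
  "fkl lam k l = ekl lam k l l"

text \<open>Generating function of the moments tr(H^m), as a formal power series.\<close>
definition trgen :: "complex \<Rightarrow> complex fps" where
  "trgen lam = (if lam \<noteq> 0
      then (fps_exp lam - fps_exp (- lam)) / (fps_exp 1 - fps_exp (-1))
      else (2 * fps_X) / (fps_exp 1 - fps_exp (-1)))"

definition trH :: "complex \<Rightarrow> complex poly \<Rightarrow> complex" where
  "trH lam p = (\<Sum>m\<le>degree p. coeff p m * (fact m * fps_nth (trgen lam) m))"

definition tr :: "complex \<Rightarrow> alg \<Rightarrow> complex" where
  "tr lam u = trH lam (u 0)"

definition pairing :: "complex \<Rightarrow> alg \<Rightarrow> alg \<Rightarrow> complex" where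
  "pairing lam u v = tr lam (amult lam u v)"

definition form_l :: "complex \<Rightarrow> nat \<Rightarrow> complex poly \<Rightarrow> complex poly \<Rightarrow> complex" where
  "form_l lam l p q = trH lam (p * q * (\<Prod>i\<in>{1..l}. Tp lam (int i)))"

definition F32 :: "complex \<Rightarrow> nat \<Rightarrow> nat \<Rightarrow> complex poly" where
  "F32 lam k l = (\<Sum>i\<le>k - l.
      smult (pochhammer (of_int (int l - int k)) i * pochhammer (of_nat (l + k + 1)) i
             / (pochhammer (of_nat (l + 1)) i * pochhammer (of_nat (l + 1) - lam) i * fact i))
            (pochhammer [:(1 - lam) / 2, - 1/2:] i))"

end

theory Submission
  imports Defs
begin

text \<open>
  In the weight normal form, ad Y sends X^m f(H) to X^(m-1) (T_m f - f(H - 2) T_0) for m \<ge> 1,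
  and f(H) Y^(-m) to -(f - f(H + 2)) Y^(1-m) for m \<le> 0. Hence e_kl is X^l f_kl(H), resp.
  f_kl(H) Y^(-l), where f_kl has exact degree k - |l| and arises by iterating these two operators.
  The trace is invariant under translating multiples of T_0 by 2; this makes the first operator
  (at weight l + 1) adjoint to the difference operator f - f(H + 2) with respect to the forms
  <,>_l and <,>_(l+1). Moving all the ad Y's onto the factor with the smaller k annihilates it,
  as each difference lowers the degree; this gives (i) and the orthogonality in (ii), and the
  basis property is triangularity in the degree. For (iii), f_kl and the 3F2 polynomial are
  eigenvectors with the same eigenvalue (k + l)(k - l + 1) of the composite of the two operators,
  which is triangular on C[H] with the distinct diagonal entries (d + 1)(d + 2l). The hypothesis
  on lam is needed only here: it keeps the denominators (l + 1 - lam)_i of the 3F2 nonzero.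
\<close>

section \<open>Moment functionals\<close>

definition moment_functional :: "'a::field_char_0 fps \<Rightarrow> 'a poly \<Rightarrow> 'a" where
  "moment_functional G p = (\<Sum>m\<le>degree p. coeff p m * (fact m * G $ m))"

lemma moment_functional_bound:
  "degree p \<le> N \<Longrightarrow> moment_functional G p = (\<Sum>m\<le>N. coeff p m * (fact m * G $ m))"
  unfolding moment_functional_def by (rule sum.mono_neutral_left) (auto simp: coeff_eq_0)

lemma moment_functional_0 [simp]: "moment_functional G 0 = 0"
  by (simp add: moment_functional_def)

lemma moment_functional_add:
  "moment_functional G (p + q) = moment_functional G p + moment_functional G q"
proof -
  define N where "N = max (degree p) (degree q)"
  have "degree (p + q) \<le> N" "degree p \<le> N" "degree q \<le> N"
    using degree_add_le_max[of p q] by (auto simp: N_def)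
  then show ?thesis
    by (simp add: moment_functional_bound[where N = N] sum.distrib algebra_simps)
qed

lemma moment_functional_smult: "moment_functional G (smult a p) = a * moment_functional G p"
  by (cases "a = 0") (simp_all add: moment_functional_def sum_distrib_left algebra_simps)

lemma moment_functional_diff:
  "moment_functional G (p - q) = moment_functional G p - moment_functional G q"
  using moment_functional_add[of G p "- q"] moment_functional_smult[of G "- 1" q] by simp

lemma moment_functional_0_fps [simp]: "moment_functional 0 p = 0"
  by (simp add: moment_functional_def)

lemma moment_functional_add_fps:
  "moment_functional (G + G') p = moment_functional G p + moment_functional G' p"
  by (simp add: moment_functional_def sum.distrib algebra_simps)

lemma moment_functional_diff_fps:
  "moment_functional (G - G') p = moment_functional G p - moment_functional G' p"
  by (simp add: moment_functional_def sum_subtractf algebra_simps)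

lemma moment_functional_const_fps: "moment_functional (fps_const c * G) p = c * moment_functional G p"
  by (simp add: moment_functional_def sum_distrib_left algebra_simps)

lemma moment_functional_pCons:
  "moment_functional G (pCons a p) = a * G $ 0 + moment_functional (fps_deriv G) p"
proof -
  have "moment_functional G (pCons a p) = (\<Sum>m\<le>Suc (degree p). coeff (pCons a p) m * (fact m * G $ m))"
    by (rule moment_functional_bound) (simp add: degree_pCons_le)
  also have "\<dots> = (\<Sum>m\<le>degree p. coeff p m * (fact (Suc m) * G $ Suc m)) + a * G $ 0"
    by (subst sum.atMost_Suc_shift) simp
  finally show ?thesis
    by (simp add: moment_functional_def algebra_simps)
qed

lemma moment_functional_translate:
  "moment_functional G (pcompose p [:c, 1:]) = moment_functional (fps_exp c * G) p"
proof (induction p arbitrary: G)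
  case 0
  then show ?case by simp
next
  case (pCons a p)
  have "pcompose (pCons a p) [:c, 1:]
      = [:a:] + smult c (pcompose p [:c, 1:]) + pCons 0 (pcompose p [:c, 1:])"
    by (simp add: pcompose_pCons algebra_simps)
  then have "moment_functional G (pcompose (pCons a p) [:c, 1:])
      = a * G $ 0 + c * moment_functional (fps_exp c * G) p
        + moment_functional (fps_exp c * fps_deriv G) p"
    by (simp add: moment_functional_add moment_functional_smult moment_functional_pCons pCons.IH)
  moreover have "fps_deriv (fps_exp c * G) = fps_exp c * fps_deriv G + fps_const c * (fps_exp c * G)"
    by (simp add: mult.assoc)
  then have "moment_functional (fps_exp c * G) (pCons a p)
      = a * G $ 0 + moment_functional (fps_exp c * fps_deriv G) p
        + c * moment_functional (fps_exp c * G) p"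
    by (simp add: moment_functional_pCons moment_functional_add_fps moment_functional_const_fps
        del: fps_deriv_mult)
  ultimately show ?case
    by (simp add: algebra_simps)
qed

lemma moment_functional_exp: "moment_functional (fps_exp a) q = poly q a"
  by (simp add: moment_functional_def poly_altdef)

lemma moment_functional_X: "moment_functional fps_X q = coeff q 1"
proof -
  obtain a b r where "q = pCons a (pCons b r)"
    by (metis pCons_cases)
  then show ?thesis
    by (simp add: moment_functional_pCons)
qed

section \<open>Triangular families and triangular operators on polynomials\<close>

lemma sum_smult_support:
  "finite S \<Longrightarrow> {k. c k \<noteq> 0} \<subseteq> S \<Longrightarrow>
     (\<Sum>k\<in>{k. c k \<noteq> 0}. smult (c k) (b k)) = (\<Sum>k\<in>S. smult (c k) (b k))"
  by (rule sum.mono_neutral_left) auto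

context
  fixes b :: "nat \<Rightarrow> 'a::field poly" and l :: nat
  assumes triangular: "\<And>k. l \<le> k \<Longrightarrow> degree (b k) \<le> k - l \<and> coeff (b k) (k - l) \<noteq> 0"
begin

lemma triangular_family_spans:
  "\<forall>i\<ge>d. coeff p i = 0 \<Longrightarrow>
     \<exists>c. (\<forall>k. c k \<noteq> 0 \<longrightarrow> k \<in> {l..<l + d}) \<and> p = (\<Sum>k\<in>{l..<l + d}. smult (c k) (b k))"
proof (induction d arbitrary: p)
  case 0
  then have "p = 0"
    by (simp add: poly_eq_iff)
  then show ?case
    by (intro exI[of _ "\<lambda>_. 0"]) simp
next
  case (Suc d)
  define a where "a = coeff p d / coeff (b (l + d)) d"
  have b_top: "degree (b (l + d)) \<le> d" "coeff (b (l + d)) d \<noteq> 0"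
    using triangular[of "l + d"] by simp_all
  have "\<forall>i\<ge>d. coeff (p - smult a (b (l + d))) i = 0"
  proof (intro allI impI)
    fix i
    assume "d \<le> i"
    then consider "i = d" | "d < i" by linarith
    then show "coeff (p - smult a (b (l + d))) i = 0"
    proof cases
      case 1
      then show ?thesis using b_top by (simp add: a_def)
    next
      case 2
      with b_top Suc.prems show ?thesis by (simp add: coeff_eq_0)
    qed
  qed
  then obtain c where c: "\<forall>k. c k \<noteq> 0 \<longrightarrow> k \<in> {l..<l + d}"
    "p - smult a (b (l + d)) = (\<Sum>k\<in>{l..<l + d}. smult (c k) (b k))"
    using Suc.IH by blast
  have "(\<Sum>k\<in>{l..<l + d}. smult ((c(l + d := a)) k) (b k)) = (\<Sum>k\<in>{l..<l + d}. smult (c k) (b k))"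
    by (rule sum.cong) auto
  then have "p = (\<Sum>k\<in>{l..<l + Suc d}. smult ((c(l + d := a)) k) (b k))"
    by (simp add: c(2)[symmetric])
  moreover have "\<forall>k. (c(l + d := a)) k \<noteq> 0 \<longrightarrow> k \<in> {l..<l + Suc d}"
    using c(1) by force
  ultimately show ?case
    by blast
qed

lemma triangular_family_independent:
  assumes "finite S" "\<forall>k. c k \<noteq> 0 \<longrightarrow> l \<le> k" "(\<Sum>k\<in>S. smult (c k) (b k)) = 0"
  shows "\<forall>k\<in>S. c k = 0"
proof (rule ccontr)
  define T where "T = {k\<in>S. c k \<noteq> 0}"
  assume "\<not> (\<forall>k\<in>S. c k = 0)"
  then have "finite T" "T \<noteq> {}"
    using assms(1) by (auto simp: T_def)
  define K where "K = Max T"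
  have K: "K \<in> S" "c K \<noteq> 0" "l \<le> K" and K_max: "\<And>k. k \<in> T \<Longrightarrow> k \<le> K"
    using Max_in[OF \<open>finite T\<close> \<open>T \<noteq> {}\<close>] \<open>finite T\<close> assms(2) by (auto simp: K_def T_def)
  have "coeff (b k) (K - l) = 0" if "k \<in> S" "k \<noteq> K" "c k \<noteq> 0" for k
  proof -
    have "k < K" "l \<le> k"
      using K_max[of k] that assms(2) by (auto simp: T_def)
    then show ?thesis
      using triangular[of k] by (intro coeff_eq_0) linarith
  qed
  then have "(\<Sum>k\<in>S - {K}. c k * coeff (b k) (K - l)) = 0"
    by (intro sum.neutral) auto
  then have "coeff (\<Sum>k\<in>S. smult (c k) (b k)) (K - l) = c K * coeff (b K) (K - l)"
    by (simp add: coeff_sum sum.remove[OF assms(1) K(1)])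
  with assms(3) K triangular[of K] show False
    by simp
qed

lemma triangular_family_coeffs_unique:
  assumes "finite S" "{k. c k \<noteq> 0} \<subseteq> S" "{k. c' k \<noteq> 0} \<subseteq> S"
    and below: "\<forall>k<l. c k = 0" "\<forall>k<l. c' k = 0"
    and sums: "(\<Sum>k\<in>S. smult (c k) (b k)) = (\<Sum>k\<in>S. smult (c' k) (b k))"
  shows "c = c'"
proof
  fix k
  have "(\<Sum>k\<in>S. smult (c k - c' k) (b k)) = 0"
    using sums by (simp add: smult_diff_left sum_subtractf)
  moreover have "\<forall>k. c k - c' k \<noteq> 0 \<longrightarrow> l \<le> k"
    using below by (metis diff_self not_le)
  ultimately have "\<forall>k\<in>S. c k - c' k = 0"
    by (intro triangular_family_independent[OF \<open>finite S\<close>])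
  moreover have "c k = 0 \<and> c' k = 0" if "k \<notin> S"
    using that assms(2,3) by blast
  ultimately show "c k = c' k"
    by (cases "k \<in> S") simp_all
qed

lemma triangular_family_unique_expansion:
  "\<exists>!c. finite {k. c k \<noteq> 0} \<and> (\<forall>k<l. c k = 0) \<and> p = (\<Sum>k\<in>{k. c k \<noteq> 0}. smult (c k) (b k))"
proof -
  obtain c where c: "\<forall>k. c k \<noteq> 0 \<longrightarrow> k \<in> {l..<l + Suc (degree p)}"
    "p = (\<Sum>k\<in>{l..<l + Suc (degree p)}. smult (c k) (b k))"
    using triangular_family_spans[of "Suc (degree p)" p] by (auto simp: coeff_eq_0)
  then have supp_c: "{k. c k \<noteq> 0} \<subseteq> {l..<l + Suc (degree p)}"
    by auto
  have c_ok: "finite {k. c k \<noteq> 0} \<and> (\<forall>k<l. c k = 0) \<and> p = (\<Sum>k\<in>{k. c k \<noteq> 0}. smult (c k) (b k))"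
  proof (intro conjI)
    show "finite {k. c k \<noteq> 0}"
      using supp_c by (rule finite_subset) simp
    show "\<forall>k<l. c k = 0"
      using c(1) by auto
    show "p = (\<Sum>k\<in>{k. c k \<noteq> 0}. smult (c k) (b k))"
      using c(2) sum_smult_support[OF _ supp_c] by simp
  qed
  moreover have "c' = c"
    if "finite {k. c' k \<noteq> 0}" "\<forall>k<l. c' k = 0" "p = (\<Sum>k\<in>{k. c' k \<noteq> 0}. smult (c' k) (b k))"
    for c'
  proof (rule triangular_family_coeffs_unique)
    let ?S = "{k. c k \<noteq> 0} \<union> {k. c' k \<noteq> 0}"
    show "finite ?S" "{k. c' k \<noteq> 0} \<subseteq> ?S" "{k. c k \<noteq> 0} \<subseteq> ?S" "\<forall>k<l. c' k = 0" "\<forall>k<l. c k = 0"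
      using c_ok that by auto
    show "(\<Sum>k\<in>?S. smult (c' k) (b k)) = (\<Sum>k\<in>?S. smult (c k) (b k))"
      using sum_smult_support[of ?S c' b] sum_smult_support[of ?S c b] c_ok that by auto
  qed
  ultimately show ?thesis
    by (intro ex1I[of _ c]) blast+
qed

end

lemma eigenvectors_proportional:
  fixes D :: "'a::field poly \<Rightarrow> 'a poly"
  assumes D_diff: "\<And>p q. D (p - q) = D p - D q"
    and D_smult: "\<And>a p. D (smult a p) = smult a (D p)"
    and D_triangular: "\<And>p d. degree p \<le> d \<Longrightarrow> coeff (D p) d = \<mu> d * coeff p d"
    and \<mu>_distinct: "\<And>d. d < n \<Longrightarrow> \<mu> d \<noteq> \<mu> n"
    and p: "D p = smult (\<mu> n) p" "degree p \<le> n" "coeff p n \<noteq> 0"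
    and q: "D q = smult (\<mu> n) q" "degree q \<le> n" "q \<noteq> 0"
  shows "\<exists>a. a \<noteq> 0 \<and> p = smult a q"
proof -
  define z where "z = smult (coeff q n) p - smult (coeff p n) q"
  have z_eigen: "D z = smult (\<mu> n) z"
    by (simp add: z_def D_diff D_smult p(1) q(1) smult_diff_right algebra_simps)
  have "z = 0"
  proof (rule ccontr)
    assume "z \<noteq> 0"
    have "degree z \<le> n"
      using p(2) q(2) by (simp add: z_def degree_diff_le)
    moreover have "coeff z n = 0"
      by (simp add: z_def)
    ultimately have "degree z < n"
      using \<open>z \<noteq> 0\<close> by (metis le_neq_implies_less leading_coeff_0_iff)
    moreover have "\<mu> (degree z) = \<mu> n"
      using D_triangular[of z "degree z"] z_eigen \<open>z \<noteq> 0\<close> by auto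
    ultimately show False
      using \<mu>_distinct by blast
  qed
  then have eq: "smult (coeff q n) p = smult (coeff p n) q"
    by (simp add: z_def)
  with p(3) q(3) have "coeff q n \<noteq> 0"
    by auto
  have "p = smult (inverse (coeff q n)) (smult (coeff q n) p)"
    using \<open>coeff q n \<noteq> 0\<close> by simp
  also have "\<dots> = smult (coeff p n / coeff q n) q"
    by (simp add: eq divide_inverse mult.commute)
  finally have "p = smult (coeff p n / coeff q n) q" .
  with p(3) \<open>coeff q n \<noteq> 0\<close> show ?thesis
    by (intro exI[of _ "coeff p n / coeff q n"]) simp
qed

section \<open>Translation of polynomials\<close>

lemma shiftp_0 [simp]: "shiftp 0 p = p"
  by (simp add: shiftp_def)

lemma shiftp_shiftp: "shiftp a (shiftp b p) = shiftp (a + b) p"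
proof -
  have "pcompose [:b, 1:] [:a, 1:] = [:a + b, 1:]"
    by (simp add: pcompose_pCons)
  then show ?thesis
    by (simp add: shiftp_def pcompose_assoc[symmetric])
qed

lemma shiftp_add [simp]: "shiftp c (p + q) = shiftp c p + shiftp c q"
  by (simp add: shiftp_def pcompose_add)

lemma shiftp_diff [simp]: "shiftp c (p - q) = shiftp c p - shiftp c q"
  by (simp add: shiftp_def pcompose_diff)

lemma shiftp_mult [simp]: "shiftp c (p * q) = shiftp c p * shiftp c q"
  by (simp add: shiftp_def pcompose_mult)

lemma shiftp_smult [simp]: "shiftp c (smult a p) = smult a (shiftp c p)"
  by (simp add: shiftp_def pcompose_smult)

lemma shiftp_const [simp]: "shiftp c [:a:] = [:a:]"
  by (simp add: shiftp_def)

lemma shiftp_zero [simp]: "shiftp c 0 = 0"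
  by (simp add: shiftp_def)

lemma shiftp_1 [simp]: "shiftp c 1 = 1"
  by (simp add: shiftp_def pcompose_1)

lemma shiftp_of_nat [simp]: "shiftp c (of_nat n) = of_nat n"
  by (simp add: of_nat_poly)

lemma shiftp_power [simp]: "shiftp c (p ^ n) = shiftp c p ^ n"
  by (induction n) simp_all

lemma shiftp_linear [simp]: "shiftp c [:a, b:] = [:a + b * c, b:]"
  by (simp add: shiftp_def pcompose_pCons)

lemma shiftp_pochhammer: "shiftp c (pochhammer p n) = pochhammer (shiftp c p) n"
  by (induction n) (simp_all add: pochhammer_Suc)

lemma shiftp_pCons: "shiftp c (pCons a p) = [:a:] + smult c (shiftp c p) + pCons 0 (shiftp c p)"
  by (simp add: shiftp_def pcompose_pCons algebra_simps)

lemma coeff_shiftp_top: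
  assumes "degree p \<le> d"
  shows "coeff (shiftp c p) d = coeff p d"
proof (cases "degree p = d")
  case True
  then show ?thesis
    using lead_coeff_comp[of "[:c, 1:]" p] by (simp add: shiftp_def degree_pcompose)
next
  case False
  with assms show ?thesis
    by (simp add: coeff_eq_0 shiftp_def degree_pcompose)
qed

lemma shiftp_diff_const: "degree p = 0 \<Longrightarrow> p - shiftp c p = 0"
  by (metis degree_0_id diff_self shiftp_const)

lemma shiftp_diff_degree:
  assumes "degree p \<le> Suc d"
  shows "degree (p - shiftp c p) \<le> d \<and> coeff (p - shiftp c p) d = - c * of_nat (Suc d) * coeff p (Suc d)"
  using assms
proof (induction p arbitrary: d)
  case 0
  then show ?case by simp
next
  case (pCons a p)
  have p_deg: "degree p \<le> d"
    using pCons.prems by (cases "p = 0") auto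
  have split: "pCons a p - shiftp c (pCons a p) = pCons 0 (p - shiftp c p) - smult c (shiftp c p)"
    by (simp add: shiftp_pCons algebra_simps)
  have top: "coeff (shiftp c p) d = coeff p d"
    using coeff_shiftp_top[OF p_deg] .
  show ?case
  proof (cases d)
    case 0
    with p_deg have "p - shiftp c p = 0"
      by (simp add: shiftp_diff_const)
    then show ?thesis
      using 0 p_deg top by (simp add: split)
  next
    case (Suc e)
    with pCons.IH[of e] p_deg
    have IH: "degree (p - shiftp c p) \<le> e" "coeff (p - shiftp c p) e = - c * of_nat d * coeff p d"
      by auto
    have "degree (pCons 0 (p - shiftp c p)) \<le> d"
      using IH(1) Suc by (cases "p - shiftp c p = 0") auto
    moreover have "degree (smult c (shiftp c p)) \<le> d"
      using p_deg by (simp add: shiftp_def degree_pcompose)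
    ultimately have "degree (pCons a p - shiftp c (pCons a p)) \<le> d"
      unfolding split by (rule degree_diff_le)
    moreover have "coeff (pCons a p - shiftp c (pCons a p)) d = - c * of_nat (Suc d) * coeff p d"
      using IH(2) top Suc by (simp add: split algebra_simps)
    ultimately show ?thesis by simp
  qed
qed

section \<open>The action of ad Y on weight components\<close>

lemma Tp_explicit: "Tp lam i = [:(lam^2 - (2 * of_int i - 1)^2) / 4, - (2 * of_int i - 1) / 2, - 1/4:]"
  by (simp add: Tp_def power2_eq_square algebra_simps)

lemma shiftp_Tp: "shiftp (2 * of_int j) (Tp lam i) = Tp lam (i + j)"
  by (simp add: Tp_def algebra_simps)

lemma shiftp_2_Tp: "shiftp 2 (Tp lam i) = Tp lam (i + 1)"
  using shiftp_Tp[of 1 lam i] by simp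

lemma shiftp_minus_2_Tp: "shiftp (-2) (Tp lam i) = Tp lam (i - 1)"
  using shiftp_Tp[of "-1" lam i] by simp

definition adY_pos :: "complex \<Rightarrow> int \<Rightarrow> complex poly \<Rightarrow> complex poly" where
  "adY_pos lam m f = Tp lam m * f - shiftp (-2) f * Tp lam 0"

definition diff2 :: "complex poly \<Rightarrow> complex poly" where
  "diff2 f = f - shiftp 2 f"

lemma adY_pos_0 [simp]: "adY_pos lam m 0 = 0"
  by (simp add: adY_pos_def)

lemma adY_pos_add: "adY_pos lam m (f + g) = adY_pos lam m f + adY_pos lam m g"
  by (simp add: adY_pos_def algebra_simps)

lemma adY_pos_diff: "adY_pos lam m (f - g) = adY_pos lam m f - adY_pos lam m g"
  by (simp add: adY_pos_def algebra_simps)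

lemma adY_pos_smult: "adY_pos lam m (smult a f) = smult a (adY_pos lam m f)"
  by (simp add: adY_pos_def smult_diff_right)

lemma diff2_0 [simp]: "diff2 0 = 0"
  by (simp add: diff2_def)

lemma diff2_add: "diff2 (f + g) = diff2 f + diff2 g"
  by (simp add: diff2_def algebra_simps)

lemma diff2_diff: "diff2 (f - g) = diff2 f - diff2 g"
  by (simp add: diff2_def algebra_simps)

lemma diff2_smult: "diff2 (smult a f) = smult a (diff2 f)"
  by (simp add: diff2_def smult_diff_right)

lemma diff2_const: "degree f = 0 \<Longrightarrow> diff2 f = 0"
  by (simp add: diff2_def shiftp_diff_const)

lemma diff2_sum: "diff2 (sum f A) = (\<Sum>i\<in>A. diff2 (f i))"
  by (induction A rule: infinite_finite_induct) (simp_all add: diff2_add)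

lemma adY_pos_sum: "adY_pos lam m (sum f A) = (\<Sum>i\<in>A. adY_pos lam m (f i))"
  by (induction A rule: infinite_finite_induct) (simp_all add: adY_pos_add)

text \<open>The relation [X, Y] = H, seen on the weight components.\<close>

lemma diff2_adY_pos: "diff2 (adY_pos lam m g) = adY_pos lam (m + 1) (diff2 g) + smult (2 * of_int m) g"
proof -
  have "Tp lam m + Tp lam 1 - Tp lam (m + 1) - Tp lam 0 = [:2 * of_int m:]"
    by (simp add: Tp_explicit field_simps power2_eq_square)
  moreover have "diff2 (adY_pos lam m g)
      = adY_pos lam (m + 1) (diff2 g) + (Tp lam m + Tp lam 1 - Tp lam (m + 1) - Tp lam 0) * g"
    by (simp add: diff2_def adY_pos_def shiftp_2_Tp shiftp_shiftp algebra_simps)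
  ultimately show ?thesis by simp
qed

lemma diff2_degree:
  assumes "degree g \<le> Suc d"
  shows "degree (diff2 g) \<le> d \<and> coeff (diff2 g) d = - 2 * of_nat (Suc d) * coeff g (Suc d)"
  using shiftp_diff_degree[OF assms, of 2] by (simp add: diff2_def)

lemma diff2_funpow_eq_0: "degree g < n \<Longrightarrow> (diff2 ^^ n) g = 0"
proof (induction n arbitrary: g)
  case 0
  then show ?case by simp
next
  case (Suc n)
  have "(diff2 ^^ n) (diff2 g) = 0"
  proof (cases "degree g")
    case 0
    then have "diff2 g = 0" by (rule diff2_const)
    moreover have "(diff2 ^^ n) 0 = 0" for n
      by (induction n) simp_all
    ultimately show ?thesis by simp
  next
    case (Suc e)
    then show ?thesis
      using Suc.prems diff2_degree[of g e] by (intro Suc.IH) simp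
  qed
  then show ?case by (simp add: funpow_Suc_right del: funpow.simps)
qed

lemma adY_pos_degree:
  assumes "degree y \<le> d"
  shows "degree (adY_pos lam m y) \<le> Suc d \<and>
         coeff (adY_pos lam m y) (Suc d) = - (of_nat d / 2 + of_int m) * coeff y d"
proof -
  define A :: "complex poly" where "A = [:(1 - (2 * of_int m - 1)^2) / 4, - of_int m:]"
  define D where "D = y - shiftp (-2) y"
  have "Tp lam m - Tp lam 0 = A"
    by (simp add: A_def Tp_explicit field_simps)
  moreover have "adY_pos lam m y = (Tp lam m - Tp lam 0) * y + Tp lam 0 * D"
    by (simp add: adY_pos_def D_def algebra_simps)
  ultimately have split: "adY_pos lam m y = A * y + Tp lam 0 * D"
    by simp
  have TD: "degree (Tp lam 0 * D) \<le> Suc d \<and> coeff (Tp lam 0 * D) (Suc d) = - (of_nat d / 2) * coeff y d"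
  proof (cases d)
    case 0
    with assms show ?thesis by (simp add: D_def shiftp_diff_const)
  next
    case (Suc e)
    with assms shiftp_diff_degree[of y e "-2"]
    have "degree D \<le> e" "coeff D e = 2 * of_nat d * coeff y d"
      by (simp_all add: D_def)
    with Suc show ?thesis
      using degree_mult_le[of "Tp lam 0" D] by (simp add: Tp_explicit coeff_eq_0)
  qed
  moreover have "degree (A * y) \<le> Suc d"
  proof -
    have "degree A \<le> 1" by (simp add: A_def)
    then show ?thesis using assms degree_mult_le[of A y] by linarith
  qed
  ultimately show ?thesis
    using assms by (simp add: split A_def degree_add_le coeff_eq_0 algebra_simps)
qed

lemma supp_hom: "supp (hom a f) = (if f = 0 then {} else {a})"
  by (auto simp: supp_def hom_def)

lemma hom_0 [simp]: "hom a 0 = (\<lambda>n. 0)"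
  by (simp add: hom_def fun_eq_iff)

lemma hprod_0_left [simp]: "hprod lam a 0 b g = 0"
  and hprod_0_right [simp]: "hprod lam a f b 0 = 0"
  by (simp_all add: hprod_def)

lemma amult_hom: "amult lam (hom a f) (hom b g) = hom (a + b) (hprod lam a f b g)"
proof (cases "f = 0 \<or> g = 0")
  case True
  then show ?thesis by (auto simp: amult_def supp_hom)
next
  case False
  then have "amult lam (hom a f) (hom b g) =
      (\<lambda>n. if a + b = n then hprod lam a (hom a f a) b (hom b g b) else 0)"
    unfolding amult_def supp_hom by simp
  then show ?thesis by (auto simp: hom_def)
qed

lemma bracket_hom:
  "bracket lam (hom a f) (hom b g) = hom (a + b) (hprod lam a f b g - hprod lam b g a f)"
  by (simp only: bracket_def amult_hom) (simp add: hom_def fun_eq_iff add.commute)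

lemma bracket_Y_hom:
  "bracket lam Yel (hom m f) = hom (m - 1) (if 1 \<le> m then adY_pos lam m f else - diff2 f)"
proof (cases "1 \<le> m")
  case True
  have "shiftp (of_int (2 * (m - 1))) (Tp lam 1) = Tp lam m"
    using shiftp_Tp[of "m - 1" lam 1] by simp
  with True show ?thesis
    by (simp add: Yel_def bracket_hom hprod_def YXp_def XYp_def adY_pos_def algebra_simps)
next
  case False
  then show ?thesis
    by (cases "m = 0") (simp_all add: Yel_def bracket_hom hprod_def YXp_def XYp_def diff2_def)
qed

lemma Xpow_eq_hom: "Xpow lam k = hom (int k) 1"
proof (induction k)
  case 0
  then show ?case by (simp add: Xpow_def)
next
  case (Suc k)
  then show ?case
    by (simp add: Xpow_def Xel_def amult_hom hprod_def add.commute)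
qed

fun adY_poly :: "complex \<Rightarrow> nat \<Rightarrow> nat \<Rightarrow> complex poly" where
  "adY_poly lam k 0 = 1"
| "adY_poly lam k (Suc j) =
    (if j < k then adY_pos lam (int k - int j) (adY_poly lam k j) else - diff2 (adY_poly lam k j))"

lemma bracket_Y_funpow_Xpow:
  "((bracket lam Yel) ^^ j) (Xpow lam k) = hom (int k - int j) (adY_poly lam k j)"
  by (induction j) (simp_all add: Xpow_eq_hom bracket_Y_hom algebra_simps)

lemma ekl_eq_hom: "l \<le> int k \<Longrightarrow> ekl lam k l = hom l (adY_poly lam k (nat (int k - l)))"
  by (simp add: ekl_def bracket_Y_funpow_Xpow)

lemma fkl_eq_adY_poly: "l \<le> k \<Longrightarrow> fkl lam k (int l) = adY_poly lam k (k - l)"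
  by (simp add: fkl_def ekl_eq_hom hom_def nat_diff_distrib)

lemma pairing_hom:
  "pairing lam (hom a f) (hom b g) = (if a + b = 0 then trH lam (hprod lam a f b g) else 0)"
  by (simp only: pairing_def tr_def amult_hom) (simp add: hom_def trH_def)

section \<open>The trace and the forms of weight l\<close>

lemma trH_eq_moment_functional: "trH lam = moment_functional (trgen lam)"
  by (simp add: fun_eq_iff trH_def moment_functional_def)

lemma trH_0 [simp]: "trH lam 0 = 0"
  and trH_diff: "trH lam (p - q) = trH lam p - trH lam q"
  and trH_smult: "trH lam (smult a p) = a * trH lam p"
  by (simp_all add: trH_eq_moment_functional moment_functional_diff moment_functional_smult)

definition trgen_numer :: "complex \<Rightarrow> complex fps" where
  "trgen_numer lam = (if lam \<noteq> 0 then fps_exp lam - fps_exp (- lam) else 2 * fps_X)"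

lemma trgen_numer_eq: "(fps_exp 1 - fps_exp (-1)) * trgen lam = trgen_numer lam"
proof -
  define den :: "complex fps" where "den = fps_exp 1 - fps_exp (-1)"
  have "den $ 0 = 0" "den $ 1 = 2"
    by (simp_all add: den_def)
  then have "subdegree den = 1"
    by (intro antisym subdegree_leI subdegree_geI) auto
  moreover have "trgen_numer lam $ 0 = 0" "trgen_numer lam $ 1 \<noteq> 0"
    by (simp_all add: trgen_numer_def)
  then have "1 \<le> subdegree (trgen_numer lam)"
    by (intro subdegree_geI) auto
  ultimately have "trgen_numer lam / den * den = trgen_numer lam"
    by (intro fps_times_divide_eq) auto
  moreover have "trgen lam = trgen_numer lam / den"
    by (simp add: trgen_def trgen_numer_def den_def)
  ultimately show ?thesis
    by (simp add: den_def mult.commute)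
qed

lemma trH_shiftp_1_diff:
  "trH lam (shiftp 1 q) - trH lam (shiftp (-1) q) = moment_functional (trgen_numer lam) q"
  by (simp add: trH_eq_moment_functional shiftp_def moment_functional_translate
      moment_functional_diff_fps trgen_numer_eq[symmetric] algebra_simps)

text \<open>This is the trace property tr(X u) = tr(u X) for u = Y s(H). By trgen_numer_eq, the
  difference tr(q(H + 1)) - tr(q(H - 1)) is q(lam) - q(-lam), resp. 2 q'(0) if lam = 0, and both
  vanish for q = T_0(H + 1) s(H + 1) = (lam^2 - H^2)/4 s(H + 1).\<close>

lemma trH_shiftp_2_Tp0_mult: "trH lam (shiftp 2 (Tp lam 0 * s)) = trH lam (Tp lam 0 * s)"
proof -
  define q where "q = shiftp 1 (Tp lam 0 * s)"
  have "shiftp 1 (Tp lam 0) = [:lam^2 / 4, 0, - 1/4:]"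
    by (simp only: Tp_def shiftp_smult shiftp_diff shiftp_const shiftp_power shiftp_linear)
       (simp add: power2_eq_square)
  then have "q = [:lam^2 / 4, 0, - 1/4:] * shiftp 1 s"
    by (simp add: q_def del: shiftp_linear)
  then have "moment_functional (trgen_numer lam) q = 0"
    by (cases "lam = 0")
       (simp_all add: trgen_numer_def fps_numeral_fps_const moment_functional_const_fps
        moment_functional_X moment_functional_diff_fps
        moment_functional_exp power2_eq_square)
  moreover have "shiftp 2 (Tp lam 0 * s) = shiftp 1 q" "Tp lam 0 * s = shiftp (-1) q"
    by (simp_all add: q_def shiftp_shiftp del: shiftp_mult)
  ultimately show ?thesis
    using trH_shiftp_1_diff[of lam q] by simp
qed

lemma YXp_Suc: "YXp lam (Suc l) = YXp lam l * Tp lam (int (Suc l))"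
  by (simp add: YXp_def prod.nat_ivl_Suc' mult.commute)

lemma YXp_Suc_shiftp: "YXp lam (Suc l) = Tp lam 1 * shiftp 2 (YXp lam l)"
proof (induction l)
  case 0
  then show ?case by (simp add: YXp_def)
next
  case (Suc l)
  have "YXp lam (Suc (Suc l)) = YXp lam (Suc l) * Tp lam (int (Suc (Suc l)))"
    by (rule YXp_Suc)
  also have "\<dots> = Tp lam 1 * (shiftp 2 (YXp lam l) * shiftp 2 (Tp lam (int (Suc l))))"
    by (simp add: Suc shiftp_2_Tp algebra_simps)
  also have "\<dots> = Tp lam 1 * shiftp 2 (YXp lam (Suc l))"
    by (simp add: YXp_Suc)
  finally show ?case .
qed

lemma XYp_eq_shiftp_YXp: "XYp lam n = shiftp (- 2 * of_nat n) (YXp lam n)"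
proof (induction n)
  case 0
  then show ?case by (simp add: XYp_def YXp_def)
next
  case (Suc n)
  have "shiftp (- 2 * of_nat (Suc n)) (Tp lam 1) = Tp lam (- int n)"
    using shiftp_Tp[of "- int (Suc n)" lam 1] by simp
  moreover have "shiftp (- 2 * of_nat (Suc n)) (shiftp 2 (YXp lam n)) = XYp lam n"
    by (simp add: Suc shiftp_shiftp algebra_simps)
  ultimately show ?case
    by (simp add: YXp_Suc_shiftp XYp_def mult.commute)
qed

lemma trH_shiftp_YXp_mult: "trH lam (shiftp (- 2 * of_nat n) (p * YXp lam n)) = trH lam (p * YXp lam n)"
proof (induction n arbitrary: p)
  case 0
  then show ?case by simp
next
  case (Suc n)
  define p' where "p' = shiftp (-2) p * Tp lam 0"
  have "shiftp (- 2 * of_nat (Suc n)) (p * YXp lam (Suc n))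
      = shiftp (- 2 * of_nat n) (shiftp (-2) (p * YXp lam (Suc n)))"
    by (simp add: shiftp_shiftp algebra_simps del: shiftp_mult)
  also have "shiftp (-2) (p * YXp lam (Suc n)) = p' * YXp lam n"
    by (simp add: YXp_Suc_shiftp p'_def shiftp_shiftp shiftp_minus_2_Tp)
  finally have "trH lam (shiftp (- 2 * of_nat (Suc n)) (p * YXp lam (Suc n)))
      = trH lam (p' * YXp lam n)"
    using Suc.IH[of p'] by simp
  also have "\<dots> = trH lam (Tp lam 0 * (shiftp (-2) p * YXp lam n))"
    by (simp add: p'_def algebra_simps)
  also have "\<dots> = trH lam (shiftp 2 (Tp lam 0 * (shiftp (-2) p * YXp lam n)))"
    by (rule trH_shiftp_2_Tp0_mult[symmetric])
  also have "shiftp 2 (Tp lam 0 * (shiftp (-2) p * YXp lam n)) = p * YXp lam (Suc n)"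
    by (simp add: YXp_Suc_shiftp shiftp_shiftp shiftp_2_Tp algebra_simps)
  finally show ?case .
qed

lemma form_l_eq: "form_l lam l p q = trH lam (p * q * YXp lam l)"
  by (simp add: form_l_def YXp_def)

lemma form_l_commute: "form_l lam l p q = form_l lam l q p"
  by (simp add: form_l_def mult.commute)

lemma form_l_smult_right: "form_l lam l p (smult a q) = a * form_l lam l p q"
  by (simp add: form_l_def trH_smult)

lemma form_l_adY_pos_diff2:
  "form_l lam l (adY_pos lam (int (Suc l)) f) g = form_l lam (Suc l) f (diff2 g)"
proof -
  define s where "s = shiftp (-2) f * g * YXp lam l"
  have "shiftp 2 (Tp lam 0 * s) = f * shiftp 2 g * YXp lam (Suc l)"
    by (simp add: s_def shiftp_shiftp shiftp_2_Tp YXp_Suc_shiftp algebra_simps)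
  then have "trH lam (Tp lam 0 * s) = trH lam (f * shiftp 2 g * YXp lam (Suc l))"
    using trH_shiftp_2_Tp0_mult[of lam s] by simp
  moreover have "form_l lam l (adY_pos lam (int (Suc l)) f) g
      = trH lam (f * g * YXp lam (Suc l)) - trH lam (Tp lam 0 * s)"
    by (simp add: form_l_eq adY_pos_def s_def YXp_Suc trH_diff[symmetric] algebra_simps)
  ultimately show ?thesis
    by (simp add: form_l_eq diff2_def trH_diff[symmetric] algebra_simps)
qed

lemma trH_hprod_pos_neg: "trH lam (hprod lam (int n) f (- int n) g) = form_l lam n f g"
proof -
  have "hprod lam (int n) f (- int n) g = shiftp (- 2 * of_nat n) (f * g * YXp lam n)"
    by (cases "n = 0") (simp_all add: hprod_def XYp_eq_shiftp_YXp XYp_def YXp_def)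
  then show ?thesis
    using trH_shiftp_YXp_mult[of lam n "f * g"] by (simp add: form_l_eq del: shiftp_mult)
qed

lemma trH_hprod_neg_pos: "trH lam (hprod lam (- int n) f (int n) g) = form_l lam n g f"
  by (cases "n = 0") (simp_all add: hprod_def form_l_def YXp_def algebra_simps)

section \<open>Orthogonality\<close>

lemma adY_poly_degree: "j \<le> k \<Longrightarrow> degree (adY_poly lam k j) \<le> j \<and> coeff (adY_poly lam k j) j \<noteq> 0"
proof (induction j)
  case 0
  then show ?case by simp
next
  case (Suc j)
  then have IH: "degree (adY_poly lam k j) \<le> j" "coeff (adY_poly lam k j) j \<noteq> 0"
    by auto
  have "of_nat j / 2 + of_int (int k - int j) \<noteq> (0::complex)"
  proof
    assume "of_nat j / 2 + of_int (int k - int j) = (0::complex)"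
    then have "(of_nat (2 * k) :: complex) = of_nat j"
      by (simp add: field_simps)
    then have "2 * k = j"
      by (simp only: of_nat_eq_iff)
    with Suc.prems show False
      by simp
  qed
  with IH Suc.prems adY_pos_degree[OF IH(1), of lam "int k - int j"] show ?case
    by simp
qed

lemma form_l_adY_poly_transfer:
  "j + i \<le> k \<Longrightarrow> form_l lam (k - (j + i)) (adY_poly lam k (j + i)) g
     = form_l lam (k - j) (adY_poly lam k j) ((diff2 ^^ i) g)"
proof (induction i arbitrary: g)
  case 0
  then show ?case by simp
next
  case (Suc i)
  have "int k - int (j + i) = int (Suc (k - (j + Suc i)))" "Suc (k - (j + Suc i)) = k - (j + i)"
    using Suc.prems by simp_all
  then have "form_l lam (k - (j + Suc i)) (adY_poly lam k (j + Suc i)) g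
      = form_l lam (k - (j + i)) (adY_poly lam k (j + i)) (diff2 g)"
    using Suc.prems form_l_adY_pos_diff2[of lam "k - (j + Suc i)"] by simp
  with Suc show ?case
    by (simp add: funpow_Suc_right del: funpow.simps)
qed

lemma adY_poly_above: "adY_poly lam k (k + n) = smult ((- 1) ^ n) ((diff2 ^^ n) (adY_poly lam k k))"
  by (induction n) (simp_all add: diff2_smult)

lemma form_l_adY_poly_orthogonal:
  assumes "l \<le> k" "l \<le> k'" "k \<noteq> k'"
  shows "form_l lam l (adY_poly lam k (k - l)) (adY_poly lam k' (k' - l)) = 0"
proof -
  have "form_l lam l (adY_poly lam k (k - l)) (adY_poly lam k' (k' - l)) = 0"
    if "l \<le> k'" "k' < k" for k k'
  proof -
    have "degree (adY_poly lam k' (k' - l)) < k - l"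
      using adY_poly_degree[of "k' - l" k' lam] that by linarith
    then have "(diff2 ^^ (k - l)) (adY_poly lam k' (k' - l)) = 0"
      by (rule diff2_funpow_eq_0)
    moreover have "form_l lam l (adY_poly lam k (k - l)) (adY_poly lam k' (k' - l))
        = form_l lam k 1 ((diff2 ^^ (k - l)) (adY_poly lam k' (k' - l)))"
      using form_l_adY_poly_transfer[of 0 "k - l" k lam] that by simp
    ultimately show ?thesis
      by (simp add: form_l_def)
  qed
  with assms form_l_commute show ?thesis
    by (metis linorder_neqE_nat)
qed

lemma form_l_adY_poly_mixed_orthogonal:
  assumes "n \<le> k" "n \<le> k'" "k \<noteq> k'"
  shows "form_l lam n (adY_poly lam k (k - n)) (adY_poly lam k' (k' + n)) = 0"
proof -
  have "form_l lam n (adY_poly lam k (k - n)) (adY_poly lam k' (k' + n))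
      = (- 1) ^ n * form_l lam n (adY_poly lam k (k - n)) ((diff2 ^^ n) (adY_poly lam k' k'))"
    by (simp add: adY_poly_above form_l_smult_right)
  also have "form_l lam n (adY_poly lam k (k - n)) ((diff2 ^^ n) (adY_poly lam k' k'))
      = form_l lam 0 (adY_poly lam k k) (adY_poly lam k' k')"
    using form_l_adY_poly_transfer[of "k - n" n k lam] assms(1) by simp
  also have "\<dots> = 0"
    using form_l_adY_poly_orthogonal[of 0 k k' lam] assms by simp
  finally show ?thesis by simp
qed

lemma pairing_ekl_orthogonal:
  assumes "\<bar>l\<bar> \<le> int k" "\<bar>l'\<bar> \<le> int k'" "\<not> (k = k' \<and> l + l' = 0)"
  shows "pairing lam (ekl lam k l) (ekl lam k' l') = 0"
proof (cases "l + l' = 0")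
  case False
  with assms show ?thesis
    by (simp add: ekl_eq_hom pairing_hom)
next
  case True
  with assms have "k \<noteq> k'"
    by auto
  show ?thesis
  proof (cases "0 \<le> l")
    case True
    define n where "n = nat l"
    have "l = int n" "l' = - int n"
      using True \<open>l + l' = 0\<close> by (simp_all add: n_def)
    with assms \<open>k \<noteq> k'\<close> show ?thesis
      by (simp add: ekl_eq_hom pairing_hom trH_hprod_pos_neg nat_diff_distrib nat_int_add
          form_l_adY_poly_mixed_orthogonal)
  next
    case False
    define n where "n = nat (- l)"
    have "l = - int n" "l' = int n"
      using False \<open>l + l' = 0\<close> by (simp_all add: n_def)
    with assms \<open>k \<noteq> k'\<close> show ?thesis
      by (simp add: ekl_eq_hom pairing_hom trH_hprod_neg_pos nat_diff_distrib nat_int_add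
          form_l_adY_poly_mixed_orthogonal)
  qed
qed

section \<open>The hypergeometric polynomials\<close>

lemma diff2_adY_pos_coeff:
  "degree y \<le> d \<Longrightarrow>
     coeff (diff2 (adY_pos lam (int l) y)) d = of_nat (Suc d) * (of_nat d + 2 * of_nat l) * coeff y d"
proof -
  assume "degree y \<le> d"
  note adY = adY_pos_degree[OF this, of lam "int l"]
  note diff = diff2_degree[OF conjunct1[OF adY]]
  show ?thesis
    unfolding conjunct2[OF diff] conjunct2[OF adY] by (simp add: field_simps)
qed

lemma adY_poly_eigen:
  "j \<le> k \<Longrightarrow> diff2 (adY_pos lam (int k - int j) (adY_poly lam k j))
     = smult ((2 * of_nat k - of_nat j) * (of_nat j + 1)) (adY_poly lam k j)"
proof (induction j)
  case 0
  then show ?case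
    using diff2_adY_pos[of lam "int k" 1] by (simp add: diff2_const)
next
  case (Suc j)
  define m where "m = int k - int (Suc j)"
  have IH: "diff2 (adY_poly lam k (Suc j))
      = smult ((2 * of_nat k - of_nat j) * (of_nat j + 1)) (adY_poly lam k j)"
    using Suc by simp
  have "diff2 (adY_pos lam m (adY_poly lam k (Suc j)))
      = adY_pos lam (m + 1) (diff2 (adY_poly lam k (Suc j)))
        + smult (2 * of_int m) (adY_poly lam k (Suc j))"
    by (rule diff2_adY_pos)
  also have "adY_pos lam (m + 1) (diff2 (adY_poly lam k (Suc j)))
      = smult ((2 * of_nat k - of_nat j) * (of_nat j + 1)) (adY_poly lam k (Suc j))"
    using Suc.prems by (simp only: IH adY_pos_smult) (simp add: m_def)
  also have "\<dots> + smult (2 * of_int m) (adY_poly lam k (Suc j))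
      = smult ((2 * of_nat k - of_nat j) * (of_nat j + 1) + 2 * of_int m) (adY_poly lam k (Suc j))"
    by (simp add: smult_add_left)
  also have "(2 * of_nat k - of_nat j) * (of_nat j + 1) + 2 * of_int m
      = (2 * of_nat k - of_nat (Suc j)) * (of_nat (Suc j) + (1::complex))"
    by (simp add: m_def algebra_simps)
  finally show ?case
    by (simp add: m_def)
qed

definition F32_arg :: "complex \<Rightarrow> complex poly" where
  "F32_arg lam = [:(1 - lam) / 2, - 1/2:]"

definition F32_coeff :: "complex \<Rightarrow> nat \<Rightarrow> nat \<Rightarrow> nat \<Rightarrow> complex" where
  "F32_coeff lam k l i = pochhammer (of_int (int l - int k)) i * pochhammer (of_nat (l + k + 1)) i
     / (pochhammer (of_nat (l + 1)) i * pochhammer (of_nat (l + 1) - lam) i * fact i)"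

lemma F32_eq_sum: "F32 lam k l = (\<Sum>i\<le>k - l. smult (F32_coeff lam k l i) (pochhammer (F32_arg lam) i))"
  by (simp add: F32_def F32_coeff_def F32_arg_def)

lemma Tp_eq_F32_arg: "Tp lam j = - ((F32_arg lam - [:of_int j:]) * (F32_arg lam + [:lam - of_int j:]))"
  by (simp add: Tp_explicit F32_arg_def field_simps power2_eq_square)

lemma adY_pos_pochhammer_F32_arg:
  "adY_pos lam (int l) (pochhammer (F32_arg lam) i)
     = smult (2 * of_nat l + of_nat i) (pochhammer (F32_arg lam) (Suc i))
       + smult ((of_nat i + of_nat l) * (lam - of_nat l - of_nat i)) (pochhammer (F32_arg lam) i)"
proof -
  let ?x = "F32_arg lam" and ?P = "pochhammer (F32_arg lam) i"
  have "shiftp (-2) ?P = pochhammer (?x + 1) i"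
    by (simp add: shiftp_pochhammer F32_arg_def one_pCons)
  then have shifted: "?x * shiftp (-2) ?P = ?P * (?x + of_nat i)"
    by (simp add: pochhammer_rec[symmetric] pochhammer_Suc)
  have "adY_pos lam (int l) ?P
      = ?P * (- ((?x - [:of_nat l:]) * (?x + [:lam - of_nat l:])))
        + (?x * shiftp (-2) ?P) * (?x + [:lam:])"
    by (simp add: adY_pos_def Tp_eq_F32_arg algebra_simps)
  also have "\<dots>
      = ?P * ((?x + of_nat i) * (?x + [:lam:]) - (?x - [:of_nat l:]) * (?x + [:lam - of_nat l:]))"
    by (simp only: shifted) (simp add: algebra_simps)
  also have "(?x + of_nat i) * (?x + [:lam:]) - (?x - [:of_nat l:]) * (?x + [:lam - of_nat l:])
      = [:2 * of_nat l + of_nat i:] * (?x + of_nat i)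
        + [:(of_nat i + of_nat l) * (lam - of_nat l - of_nat i):]"
    by (simp add: F32_arg_def of_nat_poly field_simps)
  finally show ?thesis
    by (simp add: pochhammer_Suc algebra_simps)
qed

lemma diff2_pochhammer_F32_arg:
  "diff2 (pochhammer (F32_arg lam) (Suc j)) = smult (of_nat (Suc j)) (pochhammer (F32_arg lam) j)"
proof -
  let ?x = "F32_arg lam"
  have "shiftp 2 (pochhammer ?x (Suc j)) = pochhammer (?x - 1) (Suc j)"
    by (simp add: shiftp_pochhammer F32_arg_def one_pCons)
  also have "\<dots> = (?x - 1) * pochhammer ?x j"
    by (simp only: pochhammer_rec diff_add_cancel)
  finally show ?thesis
    by (simp add: diff2_def pochhammer_Suc algebra_simps of_nat_poly smult_add_left)
qed

lemma diff2_adY_pos_pochhammer_F32_arg: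
  "diff2 (adY_pos lam (int l) (pochhammer (F32_arg lam) i))
     = smult ((2 * of_nat l + of_nat i) * of_nat (Suc i)) (pochhammer (F32_arg lam) i)
       + smult ((of_nat i + of_nat l) * (lam - of_nat l - of_nat i) * of_nat i)
           (pochhammer (F32_arg lam) (i - 1))"
proof (cases i)
  case 0
  show ?thesis
    unfolding 0
    by (simp only: adY_pos_pochhammer_F32_arg diff2_add diff2_smult diff2_pochhammer_F32_arg)
       (simp add: diff2_const)
next
  case (Suc j)
  then show ?thesis
    by (simp add: adY_pos_pochhammer_F32_arg diff2_add diff2_smult diff2_pochhammer_F32_arg
        del: pochhammer_Suc)
qed

lemma pochhammer_of_nat_minus_nonzero:
  fixes lam :: complex
  assumes lam: "\<forall>n::int. n \<noteq> 0 \<longrightarrow> lam \<noteq> of_int n"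
  shows "pochhammer (of_nat (l + 1) - lam) i \<noteq> 0"
proof
  assume "pochhammer (of_nat (l + 1) - lam) i = 0"
  then obtain j where "of_nat (l + 1) - lam = - of_nat j"
    using pochhammer_eq_0_iff[of "of_nat (l + 1) - lam" i] by blast
  then have "lam = of_int (int (Suc l + j))"
    by (simp add: algebra_simps)
  moreover have "int (Suc l + j) \<noteq> 0"
    by simp
  ultimately show False
    using lam by blast
qed

lemma F32_coeff_Suc:
  assumes lam: "\<forall>n::int. n \<noteq> 0 \<longrightarrow> lam \<noteq> of_int n"
  shows "F32_coeff lam k l (Suc i)
        * (of_nat (l + 1 + i) * (of_nat (l + 1) - lam + of_nat i) * of_nat (Suc i))
    = F32_coeff lam k l i * ((of_int (int l - int k) + of_nat i) * (of_nat (l + k + 1) + of_nat i))"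
    (is "_ * ?M = _ * ?N")
proof -
  define A :: complex
    where "A = pochhammer (of_int (int l - int k)) i * pochhammer (of_nat (l + k + 1)) i"
  define D :: complex
    where "D = pochhammer (of_nat (l + 1)) i * pochhammer (of_nat (l + 1) - lam) i * fact i"
  have "pochhammer (of_nat (l + 1) :: complex) i \<noteq> 0"
    using pochhammer_pos[of "l + 1" i] by (simp only: pochhammer_of_nat of_nat_eq_0_iff) simp
  moreover have "pochhammer (of_nat (l + 1) - lam) i \<noteq> 0" "of_nat (l + 1) - lam + of_nat i \<noteq> 0"
    using pochhammer_of_nat_minus_nonzero[OF lam, of l "Suc i"] by (simp_all add: pochhammer_Suc)
  moreover have "(of_nat (l + 1 + i) :: complex) \<noteq> 0" "(of_nat (Suc i) :: complex) \<noteq> 0"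
    by (simp_all only: of_nat_eq_0_iff)
  ultimately have "D \<noteq> 0" "?M \<noteq> 0"
    by (simp_all add: D_def)
  have "F32_coeff lam k l i = A / D"
    by (simp add: F32_coeff_def A_def D_def)
  moreover have "F32_coeff lam k l (Suc i) = A * ?N / (D * ?M)"
    by (simp add: F32_coeff_def A_def D_def pochhammer_Suc algebra_simps)
  ultimately show ?thesis
    using \<open>D \<noteq> 0\<close> \<open>?M \<noteq> 0\<close> by simp
qed

lemma F32_coeff_vanish:
  assumes "l \<le> k"
  shows "F32_coeff lam k l (Suc (k - l)) = 0"
proof -
  have "of_int (int l - int k) = - (of_nat (k - l) :: complex)"
    using assms by (simp add: of_nat_diff)
  then have "pochhammer (of_int (int l - int k)) (Suc (k - l)) = (0 :: complex)"
    by (auto simp: pochhammer_eq_0_iff)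
  then show ?thesis
    by (simp add: F32_coeff_def)
qed

lemma smult_sum_right: "smult c (\<Sum>i\<in>A. f i) = (\<Sum>i\<in>A. smult c (f i))"
  by (induction A rule: infinite_finite_induct) (simp_all add: smult_add_right)

lemma F32_eigen:
  assumes lam: "\<forall>n::int. n \<noteq> 0 \<longrightarrow> lam \<noteq> of_int n" and "l \<le> k"
  shows "diff2 (adY_pos lam (int l) (F32 lam k l))
    = smult ((of_nat k + of_nat l) * (of_nat k - of_nat l + 1)) (F32 lam k l)"
proof -
  define n where "n = k - l"
  define c :: complex where "c = (of_nat k + of_nat l) * (of_nat k - of_nat l + 1)"
  define a where "a = F32_coeff lam k l"
  define P where "P = pochhammer (F32_arg lam)"
  define G
    where "G i = smult (a i * ((of_nat i + of_nat l) * (lam - of_nat l - of_nat i) * of_nat i)) (P (i - 1))"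
    for i
  have G_Suc: "G (Suc i) = smult (a i * (c - (2 * of_nat l + of_nat i) * of_nat (Suc i))) (P i)" for i
  proof -
    have "a (Suc i) * ((of_nat (Suc i) + of_nat l) * (lam - of_nat l - of_nat (Suc i)) * of_nat (Suc i))
        = - (a i * ((of_int (int l - int k) + of_nat i) * (of_nat (l + k + 1) + of_nat i)))"
      using F32_coeff_Suc[OF lam, of k l i] by (simp add: a_def algebra_simps)
    also have "\<dots> = a i * (c - (2 * of_nat l + of_nat i) * of_nat (Suc i))"
      by (simp add: c_def algebra_simps)
    finally show ?thesis
      by (simp add: G_def)
  qed
  have "(\<Sum>i\<le>n. G i) = (\<Sum>i\<le>Suc n. G i)"
    using F32_coeff_vanish[OF \<open>l \<le> k\<close>] by (simp add: G_def a_def n_def)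
  also have "\<dots> = (\<Sum>i\<le>n. smult (a i * (c - (2 * of_nat l + of_nat i) * of_nat (Suc i))) (P i))"
    by (simp only: sum.atMost_Suc_shift G_Suc) (simp add: G_def)
  finally have G_sum: "(\<Sum>i\<le>n. G i) = \<dots>" .
  have "diff2 (adY_pos lam (int l) (F32 lam k l))
      = (\<Sum>i\<le>n. smult (a i * ((2 * of_nat l + of_nat i) * of_nat (Suc i))) (P i)) + (\<Sum>i\<le>n. G i)"
    by (simp add: F32_eq_sum adY_pos_sum diff2_sum adY_pos_smult diff2_smult
        diff2_adY_pos_pochhammer_F32_arg smult_add_right sum.distrib a_def P_def G_def n_def
        del: of_nat_Suc)
  also have "\<dots> = (\<Sum>i\<le>n. smult (c * a i) (P i))"
    by (simp add: G_sum sum.distrib[symmetric] smult_add_left[symmetric] algebra_simps del: of_nat_Suc)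
  also have "\<dots> = smult c (F32 lam k l)"
    by (simp add: F32_eq_sum smult_sum_right a_def P_def n_def)
  finally show ?thesis
    by (simp add: c_def)
qed

lemma degree_F32: "degree (F32 lam k l) \<le> k - l"
proof -
  have deg: "degree (pochhammer (F32_arg lam) i) \<le> i" for i
  proof (induction i)
    case (Suc i)
    have "degree (F32_arg lam + of_nat i) \<le> 1"
      by (simp add: F32_arg_def of_nat_poly)
    with Suc show ?case
      using degree_mult_le[of "pochhammer (F32_arg lam) i" "F32_arg lam + of_nat i"]
      by (simp add: pochhammer_Suc)
  qed simp
  show ?thesis
    unfolding F32_eq_sum
  proof (intro degree_sum_le)
    fix i
    assume "i \<in> {..k - l}"
    then show "degree (smult (F32_coeff lam k l i) (pochhammer (F32_arg lam) i)) \<le> k - l"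
      using deg[of i] degree_smult_le[of "F32_coeff lam k l i" "pochhammer (F32_arg lam) i"] by simp
  qed simp
qed

lemma F32_nonzero: "F32 lam k l \<noteq> 0"
proof -
  have "poly (pochhammer (F32_arg lam) i) (1 - lam) = pochhammer 0 i" for i
    by (induction i) (simp_all add: pochhammer_Suc F32_arg_def field_simps)
  then have "poly (F32 lam k l) (1 - lam) = (\<Sum>i\<le>k - l. F32_coeff lam k l i * pochhammer 0 i)"
    by (simp add: F32_eq_sum poly_sum)
  also have "\<dots> = F32_coeff lam k l 0"
    by (subst sum.atMost_shift) (simp add: pochhammer_0_left)
  finally show ?thesis
    by (auto simp: F32_coeff_def)
qed

lemma fkl_eq_smult_F32:
  assumes lam: "\<forall>n::int. n \<noteq> 0 \<longrightarrow> lam \<noteq> of_int n" and "l \<le> k"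
  shows "\<exists>c. c \<noteq> 0 \<and> fkl lam k (int l) = smult c (F32 lam k l)"
proof -
  define \<mu> :: "nat \<Rightarrow> complex" where "\<mu> d = of_nat (Suc d) * (of_nat d + 2 * of_nat l)" for d
  have \<mu>_eq: "\<mu> (k - l) = (of_nat k + of_nat l) * (of_nat k - of_nat l + 1)"
      "\<mu> (k - l) = (2 * of_nat k - of_nat (k - l)) * (of_nat (k - l) + 1)"
    using \<open>l \<le> k\<close> by (simp_all add: \<mu>_def of_nat_diff algebra_simps)
  have "\<mu> d \<noteq> \<mu> (k - l)" if "d < k - l" for d
  proof -
    have "Suc d * (d + 2 * l) \<le> Suc d * (k - l + 2 * l)"
      using that by (intro mult_le_mono2) simp
    also have "\<dots> < Suc (k - l) * (k - l + 2 * l)"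
      using that by (intro mult_less_mono1) auto
    finally have "Suc d * (d + 2 * l) \<noteq> Suc (k - l) * (k - l + 2 * l)"
      by (rule less_imp_neq)
    moreover have "\<mu> d' = of_nat (Suc d' * (d' + 2 * l))" for d'
      by (simp add: \<mu>_def algebra_simps)
    ultimately show ?thesis
      by (simp only: of_nat_eq_iff) simp
  qed
  moreover have "coeff (diff2 (adY_pos lam (int l) y)) d = \<mu> d * coeff y d" if "degree y \<le> d" for y d
    using diff2_adY_pos_coeff[OF that] by (simp add: \<mu>_def)
  moreover have "diff2 (adY_pos lam (int l) (adY_poly lam k (k - l)))
      = smult (\<mu> (k - l)) (adY_poly lam k (k - l))"
    using adY_poly_eigen[of "k - l" k lam] \<open>l \<le> k\<close> by (simp add: \<mu>_eq(2))
  moreover have "diff2 (adY_pos lam (int l) (F32 lam k l)) = smult (\<mu> (k - l)) (F32 lam k l)"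
    using F32_eigen[OF lam \<open>l \<le> k\<close>] by (simp add: \<mu>_eq(1))
  ultimately have "\<exists>c. c \<noteq> 0 \<and> adY_poly lam k (k - l) = smult c (F32 lam k l)"
    using adY_poly_degree[of "k - l" k lam] degree_F32 F32_nonzero
    by (intro eigenvectors_proportional[where D = "\<lambda>y. diff2 (adY_pos lam (int l) y)"])
       (simp_all add: diff2_diff adY_pos_diff diff2_smult adY_pos_smult)
  with \<open>l \<le> k\<close> show ?thesis
    by (simp add: fkl_eq_adY_poly)
qed

theorem theorem9p1:
  fixes lam :: complex
  assumes lam: "\<forall>n::int. n \<noteq> 0 \<longrightarrow> lam \<noteq> of_int n"
  shows
    "(\<forall>(k::nat) (k'::nat) (l::int) (l'::int).
        \<bar>l\<bar> \<le> int k \<longrightarrow> \<bar>l'\<bar> \<le> int k' \<longrightarrow> \<not> (k = k' \<and> l + l' = 0) \<longrightarrow>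
        pairing lam (ekl lam k l) (ekl lam k' l') = 0)
   \<and> (\<forall>l::nat.
        (\<forall>k k'. l \<le> k \<longrightarrow> l \<le> k' \<longrightarrow> k \<noteq> k' \<longrightarrow>
            form_l lam l (fkl lam k (int l)) (fkl lam k' (int l)) = 0)
      \<and> (\<forall>p::complex poly. \<exists>!c::nat \<Rightarrow> complex.
            finite {k. c k \<noteq> 0} \<and> (\<forall>k<l. c k = 0) \<and>
            p = (\<Sum>k\<in>{k. c k \<noteq> 0}. smult (c k) (fkl lam k (int l)))))
   \<and> (\<forall>(k::nat) (l::nat). l \<le> k \<longrightarrow>
        (\<exists>c::complex. c \<noteq> 0 \<and> fkl lam k (int l) = smult c (F32 lam k l)))"
proof (intro conjI allI impI)
  fix k k' :: nat and l l' :: int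
  assume "\<bar>l\<bar> \<le> int k" "\<bar>l'\<bar> \<le> int k'" "\<not> (k = k' \<and> l + l' = 0)"
  then show "pairing lam (ekl lam k l) (ekl lam k' l') = 0"
    by (rule pairing_ekl_orthogonal)
next
  fix l k k' :: nat
  assume "l \<le> k" "l \<le> k'" "k \<noteq> k'"
  then show "form_l lam l (fkl lam k (int l)) (fkl lam k' (int l)) = 0"
    by (simp add: fkl_eq_adY_poly form_l_adY_poly_orthogonal)
next
  fix l :: nat and p :: "complex poly"
  show "\<exists>!c::nat \<Rightarrow> complex. finite {k. c k \<noteq> 0} \<and> (\<forall>k<l. c k = 0) \<and>
      p = (\<Sum>k\<in>{k. c k \<noteq> 0}. smult (c k) (fkl lam k (int l)))"
    by (rule triangular_family_unique_expansion) (simp add: fkl_eq_adY_poly adY_poly_degree)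
next
  fix k l :: nat
  assume "l \<le> k"
  then show "\<exists>c::complex. c \<noteq> 0 \<and> fkl lam k (int l) = smult c (F32 lam k l)"
    by (rule fkl_eq_smult_F32[OF lam])
qed

end
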